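(* Let $s=1$, $d=2$ with basis $|+\rangle,|-\rangle$ of $\mathbb C^2$ and shift vectors $v_+=+1$, $v_-=-1$. Let $H=\frac1{\sqrt2}\begin{pmatrix}1&1\\1&-1\end{pmatrix}$, $\sigma_x=\begin{pmatrix}0&1\\1&0\end{pmatrix}$, and for $w\in(0,1)$ let $\nu_w=w\,\delta_H+(1-w)\,\delta_{\sigma_x}$. Then for the associated walk $\mathbf W$ (so $\widetilde U=wH+(1-w)\sigma_x$), $\mathbf W^2$ is strictly contractive on $\{\mathbb 1\}^\perp\subset\mathcal T$.
   Context: General setting: for a lattice dimension $s$, internal dimension $d$, shift vectors $v_1,\dots,v_d\in\mathbb Z^s$ and a Borel probability measure $\nu$ on $\mathcal U(d)$, put $\widetilde U=\int U\,\nu(dU)$, $T(B)=\int U^*BU\,\nu(dU)$. $\mathcal T$ denotes the Hilbert space of (a.e.-classes of) measurable functions $A:[0,2\pi)^s\to M_d(\mathbb C)$ with inner product $\langle A,B\rangle=(2\pi)^{-s}\int d^sp\,\frac1d\mathrm{tr}(A(p)^*B(p))$, norm $\|A\|=\langle A,A\rangle^{1/2}$ (momentum representation of translation-invariant operators on $\ell^2(\mathbb Z^s)\otimes\mathbb C^d$). $\mathbb 1$ is the constant identity function; $A_0=(2\pi)^{-s}\int A(p)d^sp$; $S(p)=\mathrm{diag}(e^{iv_1\cdot p},\dots,e^{iv_d\cdot p})$. The walk with shift $|x\otimes i\rangle\mapsto|x+v_i\otimes i\rangle$ and coins i.i.d. in space and time with law $\nu$ acts on $\mathcal T$ by $\mathbf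 W(A)(p)=S(p)^*\big[T(A_0)+\widetilde U^*(A(p)-A_0)\widetilde U\big]S(p)$. A bounded map $\mathbf V$ on $\mathcal T$ is strictly contractive on $\{\mathbb 1\}^\perp$ if there is $c<1$ with $\|\mathbf V(A)\|\le c\|A\|$ for all $A\in\mathcal T$ with $\langle\mathbb 1,A\rangle=0$. *)

theory Defs
  imports "HOL-Analysis.Analysis"
begin

(* 2x2 complex matrices; index 1 = |+>, index 2 = |-> (via 'vector') *)
type_synonym cmat = "complex^2^2"

definition mat2 :: "complex \<Rightarrow> complex \<Rightarrow> complex \<Rightarrow> complex \<Rightarrow> cmat" where
  "mat2 a b c d = vector [vector [a, b], vector [c, d]]"

definition adj :: "cmat \<Rightarrow> cmat" where
  "adj M = (\<chi> i j. cnj (M $ j $ i))"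

definition tr :: "cmat \<Rightarrow> complex" where
  "tr M = (\<Sum>i\<in>UNIV. M $ i $ i)"

definition Hm :: cmat where
  "Hm = mat2 (1 / sqrt 2) (1 / sqrt 2) (1 / sqrt 2) (- 1 / sqrt 2)"

definition sigx :: cmat where
  "sigx = mat2 0 1 1 0"

(* shift S(p) = diag(e^{i v_+ p}, e^{i v_- p}) with v_+ = 1, v_- = -1 *)
definition Sh :: "real \<Rightarrow> cmat" where
  "Sh p = mat2 (cis p) 0 0 (cis (- p))"

definition Ut :: "real \<Rightarrow> cmat" where
  "Ut w = w *\<^sub>R Hm + (1 - w) *\<^sub>R sigx"

(* T(B) = int U^* B U nu(dU) *)
definition Tmap :: "real \<Rightarrow> cmat \<Rightarrow> cmat" where
  "Tmap w B = w *\<^sub>R (adj Hm ** B ** Hm) + (1 - w) *\<^sub>R (adj sigx ** B ** sigx)"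

definition Pdom :: "real set" where
  "Pdom = {0..<2 * pi}"

definition A0 :: "(real \<Rightarrow> cmat) \<Rightarrow> cmat" where
  "A0 A = (\<chi> i j. complex_of_real (1 / (2 * pi)) *
              (\<integral>p. A p $ i $ j \<partial>(lebesgue_on Pdom)))"

definition inT :: "(real \<Rightarrow> cmat) \<Rightarrow> bool" where
  "inT A \<longleftrightarrow> A \<in> borel_measurable (lebesgue_on Pdom)
      \<and> integrable (lebesgue_on Pdom) (\<lambda>p. (norm (A p))^2)"

definition tinner :: "(real \<Rightarrow> cmat) \<Rightarrow> (real \<Rightarrow> cmat) \<Rightarrow> complex" where
  "tinner A B = complex_of_real (1 / (2 * pi)) *
      (\<integral>p. (1 / 2) * tr (adj (A p) ** B p) \<partial>(lebesgue_on Pdom))"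

definition tnorm :: "(real \<Rightarrow> cmat) \<Rightarrow> real" where
  "tnorm A = sqrt (Re (tinner A A))"

definition one_T :: "real \<Rightarrow> cmat" where
  "one_T = (\<lambda>p. mat 1)"

definition Wop :: "real \<Rightarrow> (real \<Rightarrow> cmat) \<Rightarrow> (real \<Rightarrow> cmat)" where
  "Wop w A = (\<lambda>p. adj (Sh p) **
       (Tmap w (A0 A) + adj (Ut w) ** (A p - A0 A) ** Ut w) ** Sh p)"

end

theory Submission
  imports Defs
begin

(* An observable A splits into its mean a = A_0 and its fluctuation A - a, and
   ||A||^2 = (|a|^2 + msq (A - a)) / 2 with Frobenius norms; A is orthogonal to 1 iff tr a = 0.
   One step of the walk sends a to T(a) and a fluctuation Y to Ut^* Y Ut, then conjugates by S(p).
   Since Ut = w H + (1 - w) sigma_x is a real combination of sigma_z and sigma_x, Ut^2 = lam w * 1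
   with lam w < 1, so fluctuations shrink by lam w; T itself is only a contraction.  In the
   second step, the off-diagonal part of T(a) has become a fluctuation (it carries phases
   e^{+-2ip}) and is damped, while its diagonal part is controlled by the mixing estimate
   m |T a|^2 + (1 - m) |Dg (T a)|^2 <= m |a|^2 for traceless a, with m = w^2 + (1 - w)^2 < 1. *)

subsection \<open>Calculus of 2x2 matrices\<close>

lemma mat2_nth [simp]:
  "mat2 a b c d $ 1 $ 1 = a" "mat2 a b c d $ 1 $ 2 = b"
  "mat2 a b c d $ 2 $ 1 = c" "mat2 a b c d $ 2 $ 2 = d"
  by (simp_all add: mat2_def)

lemma mat2_eta: "X = mat2 (X$1$1) (X$1$2) (X$2$1) (X$2$2)"
  by (simp add: vec_eq_iff forall_2)

lemma mat2_eq_iff: "mat2 a b c d = mat2 a' b' c' d' \<longleftrightarrow> a = a' \<and> b = b' \<and> c = c' \<and> d = d'"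
  by (metis mat2_nth)

lemma mat2_mult:
  "mat2 a b c d ** mat2 e f g h = mat2 (a*e + b*g) (a*f + b*h) (c*e + d*g) (c*f + d*h)"
  by (simp add: vec_eq_iff forall_2 matrix_matrix_mult_def sum_2)

lemma mat2_add: "mat2 a b c d + mat2 e f g h = mat2 (a+e) (b+f) (c+g) (d+h)"
  by (simp add: vec_eq_iff forall_2)

lemma mat2_scaleR: "r *\<^sub>R mat2 a b c d = mat2 (r *\<^sub>R a) (r *\<^sub>R b) (r *\<^sub>R c) (r *\<^sub>R d)"
  by (simp add: vec_eq_iff forall_2)

lemma mat2_one: "mat 1 = mat2 1 0 0 1"
  by (simp add: vec_eq_iff forall_2 mat_def)

lemma adj_mat2: "adj (mat2 a b c d) = mat2 (cnj a) (cnj c) (cnj b) (cnj d)"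
  by (simp add: vec_eq_iff forall_2 adj_def)

lemma tr_mat2: "tr (mat2 a b c d) = a + d"
  by (simp add: tr_def sum_2)

lemma norm_mat2_sq:
  "(norm (mat2 a b c d))^2 = (cmod a)^2 + (cmod b)^2 + (cmod c)^2 + (cmod d)^2"
  by (simp add: norm_vec_def L2_set_def sum_2)

lemma tr_adj_mult_self: "tr (adj X ** X) = complex_of_real ((norm X)^2)"
proof -
  obtain a b c d where X: "X = mat2 a b c d" using mat2_eta by blast
  show ?thesis
    unfolding X adj_mat2 mat2_mult tr_mat2 norm_mat2_sq of_real_add complex_norm_square
    by (simp add: mult.commute)
qed

lemma bounded_linear_sandwich:
  fixes A B :: cmat
  shows "bounded_linear (\<lambda>Y. A ** Y ** B)"
proof -
  have "linear (\<lambda>Y::cmat. A ** Y ** B)"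
  proof (rule linearI)
    fix X Y :: cmat and r :: real
    obtain a1 a2 a3 a4 where A: "A = mat2 a1 a2 a3 a4" using mat2_eta by blast
    obtain b1 b2 b3 b4 where B: "B = mat2 b1 b2 b3 b4" using mat2_eta by blast
    obtain x1 x2 x3 x4 where X: "X = mat2 x1 x2 x3 x4" using mat2_eta by blast
    obtain y1 y2 y3 y4 where Y: "Y = mat2 y1 y2 y3 y4" using mat2_eta by blast
    show "A ** (X + Y) ** B = A ** X ** B + A ** Y ** B"
      unfolding A B X Y mat2_add mat2_mult mat2_eq_iff by (simp add: algebra_simps)
    show "A ** (r *\<^sub>R X) ** B = r *\<^sub>R (A ** X ** B)"
      unfolding A B X mat2_scaleR mat2_mult mat2_eq_iff by (simp add: scaleR_conv_of_real algebra_simps)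
  qed
  then show ?thesis by (simp add: linear_conv_bounded_linear)
qed

subsection \<open>Real combinations of sigma_z and sigma_x\<close>

(* zx p q = p sigma_z + q sigma_x satisfies zx p q ** zx p q = (p^2 + q^2) 1.  Both coins
   and their average are of this form, which makes all conjugations explicit. *)
definition zx :: "real \<Rightarrow> real \<Rightarrow> cmat" where
  "zx p q = mat2 (of_real p) (of_real q) (of_real q) (- of_real p)"

lemma adj_zx: "adj (zx p q) = zx p q"
  by (simp add: zx_def adj_mat2)

lemma norm_zx_conj: "norm (zx p q ** Y ** zx p q) = (p^2 + q^2) * norm Y"
proof -
  obtain a b c d where Y: "Y = mat2 a b c d" using mat2_eta by blast
  have "(norm (zx p q ** Y ** zx p q))^2 = ((p^2 + q^2) * norm Y)^2"
    unfolding Y zx_def mat2_mult norm_mat2_sq power_mult_distrib cmod_power2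
    by (simp add: power2_eq_square algebra_simps)
  then show ?thesis by (rule power2_eq_imp_eq) simp_all
qed

lemma Hm_zx: "Hm = zx (1 / sqrt 2) (1 / sqrt 2)"
  by (simp add: Hm_def zx_def)

lemma sigx_zx: "sigx = zx 0 1"
  by (simp add: sigx_def zx_def)

lemma Hm_conj:
  "zx (1/sqrt 2) (1/sqrt 2) ** mat2 a b c d ** zx (1/sqrt 2) (1/sqrt 2)
     = mat2 ((a+b+c+d)/2) ((a-b+c-d)/2) ((a+b-c-d)/2) ((a-b-c+d)/2)"
proof -
  define h where "h = complex_of_real (1 / sqrt 2)"
  have hh: "h * h = 1/2"
    unfolding h_def of_real_mult[symmetric] by simp
  have "x * h * (y * h) = x * y / 2" for x y using hh by (simp add: algebra_simps)
  then show ?thesis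
    unfolding zx_def mat2_mult mat2_eq_iff h_def[symmetric] by (simp add: algebra_simps hh)
qed

lemma sigx_conj: "zx 0 1 ** mat2 a b c d ** zx 0 1 = mat2 d c b a"
  by (simp add: zx_def mat2_mult)

subsection \<open>The averaged coin\<close>

(* Ut w ** Ut w = lam w 1: the averaged coin is sqrt (lam w) times a reflection *)
definition lam :: "real \<Rightarrow> real" where
  "lam w = 1 - (2 - sqrt 2) * (w * (1 - w))"

lemma Ut_zx: "Ut w = zx (w / sqrt 2) (w / sqrt 2 + (1 - w))"
  unfolding Ut_def Hm_zx sigx_zx zx_def mat2_scaleR mat2_add
  by (simp add: scaleR_conv_of_real mat2_eq_iff algebra_simps)

lemma lam_sum_squares: "(w / sqrt 2)^2 + (w / sqrt 2 + (1 - w))^2 = lam w"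
proof -
  define s where "s = sqrt 2"
  have s: "s * s = 2" "s \<noteq> 0" unfolding s_def by simp_all
  have "(w / s)^2 + (w / s + (1 - w))^2 = 1 - (2 - s) * (w * (1 - w))"
    using s by (simp add: field_simps power2_eq_square) (simp add: mult.assoc[symmetric] s(1))
  then show ?thesis unfolding lam_def s_def .
qed

lemma lam_nonneg: "0 \<le> lam w"
  unfolding lam_sum_squares[symmetric] by simp

lemma lam_less_one:
  assumes "0 < w" "w < 1"
  shows "lam w < 1"
  unfolding lam_def using assms sqrt2_less_2 by simp

lemma lam_sq_less_one:
  assumes "0 < w" "w < 1"
  shows "(lam w)^2 < 1"
  using lam_nonneg[of w] lam_less_one[OF assms] by (simp add: power_less_one_iff)

definition coin_conj :: "real \<Rightarrow> cmat \<Rightarrow> cmat" where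
  "coin_conj w Y = adj (Ut w) ** Y ** Ut w"

lemma norm_coin_conj: "norm (coin_conj w Y) = lam w * norm Y"
  by (simp add: coin_conj_def Ut_zx adj_zx norm_zx_conj lam_sum_squares)

lemma bounded_linear_coin_conj: "bounded_linear (coin_conj w)"
  unfolding coin_conj_def by (rule bounded_linear_sandwich)

subsection \<open>The averaged channel T on constant observables\<close>

(* the diagonal part of a matrix: averaging S(p)^* X S(p) over p produces it *)
definition Dg :: "cmat \<Rightarrow> cmat" where
  "Dg X = mat2 (X$1$1) 0 0 (X$2$2)"

(* w^2 + (1 - w)^2 < 1 measures how much T mixes diagonal and off-diagonal parts *)
definition mix :: "real \<Rightarrow> real" where
  "mix w = w^2 + (1 - w)^2"

lemma mix_bounds:
  assumes "0 < w" "w < 1"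
  shows "0 < mix w" "mix w < 1"
proof -
  show "0 < mix w" unfolding mix_def using assms by (simp add: add_pos_nonneg)
  have "mix w = 1 - 2 * (w * (1 - w))" unfolding mix_def by (simp add: power2_eq_square algebra_simps)
  then show "mix w < 1" using assms by simp
qed

lemma Tmap_zx:
  "Tmap w B = w *\<^sub>R (zx (1/sqrt 2) (1/sqrt 2) ** B ** zx (1/sqrt 2) (1/sqrt 2))
              + (1 - w) *\<^sub>R (zx 0 1 ** B ** zx 0 1)"
  by (simp add: Tmap_def Hm_zx sigx_zx adj_zx)

(* T is a convex combination of unitary conjugations, hence a contraction *)
lemma norm_Tmap_le:
  assumes "0 \<le> w" "w \<le> 1"
  shows "norm (Tmap w B) \<le> norm B"
proof -
  have unit: "(1/sqrt 2)^2 + (1/sqrt 2)^2 = (1::real)" by (simp add: power_divide)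
  have "norm (Tmap w B) \<le> norm (w *\<^sub>R (zx (1/sqrt 2) (1/sqrt 2) ** B ** zx (1/sqrt 2) (1/sqrt 2)))
        + norm ((1 - w) *\<^sub>R (zx 0 1 ** B ** zx 0 1))"
    unfolding Tmap_zx by (rule norm_triangle_ineq)
  also have "\<dots> = w * norm B + (1 - w) * norm B"
    using assms by (simp add: norm_zx_conj unit)
  finally show ?thesis by (simp add: algebra_simps)
qed

(* Key mixing estimate: on traceless matrices, T loses a fixed fraction of the norm unless
   the image has vanishing diagonal; in the latter case the shift averages it away. *)
lemma Tmap_traceless_mixing:
  assumes "tr a = 0" "0 \<le> w" "w \<le> 1"
  shows "mix w * (norm (Tmap w a))^2 + (1 - mix w) * (norm (Dg (Tmap w a)))^2
           \<le> mix w * (norm a)^2"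
proof -
  obtain x y z d where a: "a = mat2 x y z d" using mat2_eta by blast
  have d: "d = - x" using assms(1) unfolding a tr_mat2 by (simp add: add_eq_0_iff)
  define u v where "u = (y + z) / 2" and "v = (y - z) / 2"
  define P Q where "P = w * u - (1 - w) * x" and "Q = w * x + (1 - w) * u"
  have Ta: "Tmap w a = mat2 P (Q - v) (Q + v) (- P)"
    unfolding Tmap_zx a d Hm_conj sigx_conj mat2_scaleR mat2_add mat2_eq_iff
    by (simp add: scaleR_conv_of_real P_def Q_def u_def v_def field_simps)
  have parallelogram: "(cmod (p + q))^2 + (cmod (p - q))^2 = 2 * (cmod p)^2 + 2 * (cmod q)^2"
    for p q :: complex
    unfolding cmod_power2 by (simp add: power2_eq_square algebra_simps)
  have yz: "y = u + v" "z = u - v" unfolding u_def v_def by (simp_all add: field_simps)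
  have na: "(norm a)^2 = 2 * (cmod x)^2 + 2 * (cmod u)^2 + 2 * (cmod v)^2"
    unfolding a d norm_mat2_sq yz using parallelogram[of u v] by simp
  have nT: "(norm (Tmap w a))^2 = 2 * (cmod P)^2 + 2 * (cmod Q)^2 + 2 * (cmod v)^2"
    unfolding Ta norm_mat2_sq using parallelogram[of Q v] by simp
  have nD: "(norm (Dg (Tmap w a)))^2 = 2 * (cmod P)^2"
    unfolding Ta Dg_def norm_mat2_sq by simp
  have PQ: "(cmod P)^2 + (cmod Q)^2 = mix w * ((cmod x)^2 + (cmod u)^2)"
    unfolding P_def Q_def mix_def cmod_power2 by (simp add: power2_eq_square algebra_simps)
  have m1: "mix w \<le> 1"
    using assms(2,3) mult_left_le_one_le[of w w] mult_left_le_one_le[of "1-w" "1-w"]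
    unfolding mix_def by (simp add: power2_eq_square)
  have "(cmod P)^2 \<le> mix w * ((cmod x)^2 + (cmod u)^2)"
    using PQ zero_le_power2[of "cmod Q"] by linarith
  then have "(1 - mix w) * (cmod P)^2 \<le> (1 - mix w) * (mix w * ((cmod x)^2 + (cmod u)^2))"
    using m1 by (intro mult_left_mono) auto
  moreover have Q: "(cmod Q)^2 = mix w * ((cmod x)^2 + (cmod u)^2) - (cmod P)^2"
    using PQ by linarith
  ultimately show ?thesis
    unfolding na nT nD Q by (simp add: algebra_simps)
qed

subsection \<open>Square-integrable observables on the Brillouin zone\<close>

abbreviation Pmeas :: "real measure" where
  "Pmeas \<equiv> lebesgue_on Pdom"

lemma Pdom_sets: "Pdom \<in> sets lebesgue"
  unfolding Pdom_def by simp

lemma Pdom_lmeasurable: "Pdom \<in> lmeasurable"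
  unfolding Pdom_def
  by (intro bounded_set_imp_lmeasurable) (auto intro: bounded_subset[of "{0..2*pi}"])

lemma measure_Pmeas: "measure Pmeas Pdom = 2 * pi"
  using Pdom_sets unfolding Pdom_def by (simp add: measure_restrict_space)

interpretation Pmeas: finite_measure Pmeas
  by (rule finite_measure_lebesgue_on[OF Pdom_lmeasurable])

lemma integral_cis_multiple:
  fixes n :: int
  assumes "n \<noteq> 0"
  shows "integral\<^sup>L Pmeas (\<lambda>p. cis (n * p)) = 0"
proof -
  have meas: "(\<lambda>p. cis (n * p)) \<in> borel_measurable Pmeas"
    by (intro continuous_imp_measurable_on_sets_lebesgue Pdom_sets continuous_intros)
  have integ: "integrable Pmeas (\<lambda>p. cis (n * p))"
    by (rule Bochner_Integration.integrable_bound[OF Pmeas.integrable_const[of "1::real"] meas]) auto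
  define F where "F p = cis (n * p) / (\<i> * of_int n)" for p :: real
  have "((\<lambda>p. cis (n * p)) has_integral (F (2 * pi) - F 0)) {0..2 * pi}"
  proof (rule fundamental_theorem_of_calculus)
    fix x :: real
    show "(F has_vector_derivative cis (n * x)) (at x within {0..2 * pi})"
      unfolding F_def has_vector_derivative_def using assms
      by (auto intro!: derivative_eq_intros simp: scaleR_conv_of_real field_simps)
  qed simp
  moreover have "F (2 * pi) = F 0"
  proof -
    have "cis (n * (2 * pi)) = 1"
      unfolding mult.commute[of "real_of_int n"] by (rule cis_multiple_2pi) simp
    then show ?thesis unfolding F_def by simp
  qed
  ultimately have "((\<lambda>p. cis (n * p)) has_integral 0) {0..2 * pi}" by simp
  then have "((\<lambda>p. cis (n * p)) has_integral 0) Pdom"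
    unfolding Pdom_def
    by (rule has_integral_spike_set_eq[THEN iffD1, rotated -1])
       (auto intro: negligible_subset[of "{2*pi}"])
  with has_integral_integral_lebesgue_on[OF integ Pdom_sets] show ?thesis
    by (rule has_integral_unique)
qed

(* the space T, without the quotient by null functions *)
definition L2 :: "(real \<Rightarrow> cmat) \<Rightarrow> bool" where
  "L2 F \<longleftrightarrow> F \<in> borel_measurable Pmeas \<and> integrable Pmeas (\<lambda>p. (norm (F p))^2)"

lemma inT_iff_L2: "inT A \<longleftrightarrow> L2 A"
  unfolding inT_def L2_def by simp

lemma L2_integrable:
  assumes "L2 F"
  shows "integrable Pmeas F"
proof (rule Bochner_Integration.integrable_bound)
  show "integrable Pmeas (\<lambda>p. 1 + (norm (F p))^2)"
    using assms unfolding L2_def by simp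
  show "F \<in> borel_measurable Pmeas" using assms unfolding L2_def by simp
  have "norm y \<le> 1 + (norm y)^2" for y :: cmat
    using zero_le_power2[of "norm y - 1"] norm_ge_zero[of y] by (simp only: power2_diff power_one mult_1_right)
  then show "AE p in Pmeas. norm (F p) \<le> norm (1 + (norm (F p))^2)"
    by (simp add: add_increasing)
qed

lemma L2_const: "L2 (\<lambda>p. X)"
  unfolding L2_def by simp

lemma L2_add:
  assumes "L2 F" "L2 G"
  shows "L2 (\<lambda>p. F p + G p)"
proof -
  have meas: "(\<lambda>p. F p + G p) \<in> borel_measurable Pmeas"
    using assms unfolding L2_def by (auto intro: borel_measurable_add)
  have bound: "(norm (x + y))^2 \<le> 2 * (norm x)^2 + 2 * (norm y)^2" for x y :: cmat
  proof -
    have "(norm (x + y))^2 \<le> (norm x + norm y)^2"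
      by (simp add: norm_triangle_ineq power_mono)
    also have "\<dots> \<le> 2 * (norm x)^2 + 2 * (norm y)^2"
      using zero_le_power2[of "norm x - norm y"] unfolding power2_diff power2_sum by linarith
    finally show ?thesis .
  qed
  have "integrable Pmeas (\<lambda>p. (norm (F p + G p))^2)"
    by (rule Bochner_Integration.integrable_bound[of _ "\<lambda>p. 2 * (norm (F p))^2 + 2 * (norm (G p))^2"])
       (use assms meas bound in \<open>auto simp: L2_def\<close>)
  with meas show ?thesis unfolding L2_def by simp
qed

lemma L2_bounded_linear:
  assumes "bounded_linear L" "L2 F"
  shows "L2 (\<lambda>p. L (F p))"
proof -
  interpret L: bounded_linear L by (rule assms(1))
  obtain K where K: "\<And>x. norm (L x) \<le> norm x * K" using L.pos_bounded by blast
  have meas: "(\<lambda>p. L (F p)) \<in> borel_measurable Pmeas"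
    using assms(2) unfolding L2_def
    by (intro borel_measurable_continuous_on[OF L.continuous_on[OF continuous_on_id]]) simp
  have bound: "(norm (L x))^2 \<le> K^2 * (norm x)^2" for x
  proof -
    have "(norm (L x))^2 \<le> (norm x * K)^2" by (rule power_mono[OF K norm_ge_zero])
    then show ?thesis by (simp add: power_mult_distrib mult.commute)
  qed
  have "integrable Pmeas (\<lambda>p. (norm (L (F p)))^2)"
    by (rule Bochner_Integration.integrable_bound[of _ "\<lambda>p. K^2 * (norm (F p))^2"])
       (use assms(2) meas bound in \<open>auto simp: L2_def\<close>)
  with meas show ?thesis unfolding L2_def by simp
qed

lemma L2_diff:
  assumes "L2 F" "L2 G"
  shows "L2 (\<lambda>p. F p - G p)"
  using L2_add[OF assms(1) L2_bounded_linear[OF bounded_linear_minus[OF bounded_linear_ident] assms(2)]]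
  by simp

definition mean :: "(real \<Rightarrow> cmat) \<Rightarrow> cmat" where
  "mean F = (1 / (2 * pi)) *\<^sub>R integral\<^sup>L Pmeas F"

definition msq :: "(real \<Rightarrow> cmat) \<Rightarrow> real" where
  "msq F = (1 / (2 * pi)) * integral\<^sup>L Pmeas (\<lambda>p. (norm (F p))^2)"

lemma integral_entry:
  fixes F :: "real \<Rightarrow> cmat"
  assumes "integrable Pmeas F"
  shows "integral\<^sup>L Pmeas (\<lambda>p. F p $ i $ j) = integral\<^sup>L Pmeas F $ i $ j"
  using integral_bounded_linear[OF bounded_linear_compose[OF bounded_linear_vec_nth bounded_linear_vec_nth] assms]
  by simp

lemma A0_eq_mean:
  assumes "integrable Pmeas F"
  shows "A0 F = mean F"
  unfolding A0_def mean_def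
  by (simp add: vec_eq_iff integral_entry[OF assms]) (simp add: scaleR_conv_of_real)

lemma mean_add:
  assumes "L2 F" "L2 G"
  shows "mean (\<lambda>p. F p + G p) = mean F + mean G"
  unfolding mean_def using L2_integrable[OF assms(1)] L2_integrable[OF assms(2)]
  by (simp add: scaleR_add_right)

lemma msq_nonneg: "0 \<le> msq F"
  unfolding msq_def by (simp add: integral_nonneg_AE)

lemma msq_scale:
  assumes "\<And>p. norm (F p) = k * norm (G p)"
  shows "msq F = k^2 * msq G"
  unfolding msq_def assms power_mult_distrib by simp

(* Pythagoras: a constant is orthogonal to a function of mean zero *)
lemma msq_const_plus:
  assumes "L2 G" "integral\<^sup>L Pmeas G = 0"
  shows "msq (\<lambda>p. X + G p) = (norm X)^2 + msq G"
proof -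
  have iG: "integrable Pmeas G" by (rule L2_integrable[OF assms(1)])
  have i2: "integrable Pmeas (\<lambda>p. (norm (G p))^2)" using assms(1) unfolding L2_def by simp
  have "(norm (X + G p))^2 = (norm X)^2 + 2 * inner X (G p) + (norm (G p))^2" for p
    by (simp add: power2_norm_eq_inner inner_add_left inner_add_right inner_commute)
  then have "integral\<^sup>L Pmeas (\<lambda>p. (norm (X + G p))^2)
      = 2 * pi * (norm X)^2 + 2 * integral\<^sup>L Pmeas (\<lambda>p. inner X (G p))
        + integral\<^sup>L Pmeas (\<lambda>p. (norm (G p))^2)"
    using iG i2 measure_Pmeas by simp
  also have "integral\<^sup>L Pmeas (\<lambda>p. inner X (G p)) = 0"
    using iG assms(2) by simp
  finally show ?thesis unfolding msq_def by (simp add: field_simps)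
qed

lemma integral_minus_mean:
  assumes "L2 F"
  shows "integral\<^sup>L Pmeas (\<lambda>p. F p - mean F) = 0"
  using L2_integrable[OF assms] measure_Pmeas by (simp add: mean_def)

lemma L2_minus_mean: "L2 F \<Longrightarrow> L2 (\<lambda>p. F p - mean F)"
  by (rule L2_diff[OF _ L2_const])

lemma msq_decomp:
  assumes "L2 F"
  shows "msq F = (norm (mean F))^2 + msq (\<lambda>p. F p - mean F)"
  using msq_const_plus[OF L2_minus_mean[OF assms] integral_minus_mean[OF assms], of "mean F"]
  by simp

lemma norm_mean_sq_le:
  assumes "L2 F"
  shows "(norm (mean F))^2 \<le> msq F"
  using msq_decomp[OF assms] msq_nonneg[of "\<lambda>p. F p - mean F"] by linarith

lemma tnorm_eq_msq: "tnorm F = sqrt (msq F / 2)"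
proof -
  have integrand: "(\<lambda>p. (1 / 2) * tr (adj (F p) ** F p)) = (\<lambda>p. complex_of_real ((norm (F p))^2 / 2))"
    unfolding tr_adj_mult_self by simp
  have "tinner F F = complex_of_real (1 / (2 * pi))
                     * complex_of_real (integral\<^sup>L Pmeas (\<lambda>p. (norm (F p))^2 / 2))"
    by (simp only: tinner_def integrand integral_complex_of_real)
  also have "\<dots> = complex_of_real (msq F / 2)"
    unfolding msq_def of_real_mult[symmetric] by simp
  finally have "Re (tinner F F) = msq F / 2" by (simp only: Re_complex_of_real)
  then show ?thesis unfolding tnorm_def by simp
qed

lemma tinner_one_T:
  assumes "integrable Pmeas A"
  shows "tinner one_T A = tr (mean A) / 2"
proof -
  have adj_one: "adj (mat 1) = mat 1" unfolding mat2_one adj_mat2 by simp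
  have entries: "integrable Pmeas (\<lambda>p. A p $ i $ j)" for i j
    using integrable_bounded_linear[OF bounded_linear_compose[OF bounded_linear_vec_nth
          bounded_linear_vec_nth] assms] by simp
  have "tinner one_T A = complex_of_real (1 / (2 * pi))
          * integral\<^sup>L Pmeas (\<lambda>p. (1 / 2) * (A p $ 1 $ 1 + A p $ 2 $ 2))"
    unfolding tinner_def one_T_def adj_one matrix_mul_lid tr_def sum_2 ..
  also have "\<dots> = tr (mean A) / 2"
    using entries unfolding mean_def tr_def sum_2 vector_scaleR_component
    by (simp add: integral_entry[OF assms, symmetric] scaleR_conv_of_real algebra_simps)
  finally show ?thesis .
qed

subsection \<open>Conjugation by the shift\<close>

definition shift_conj :: "real \<Rightarrow> cmat \<Rightarrow> cmat" where
  "shift_conj p Y = adj (Sh p) ** Y ** Sh p"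

lemma shift_conj_eq:
  "shift_conj p Y = mat2 (Y$1$1) (cis (-2 * p) * Y$1$2) (cis (2 * p) * Y$2$1) (Y$2$2)"
proof -
  obtain a b c d where Y: "Y = mat2 a b c d" using mat2_eta by blast
  have phase: "cis s * y * cis t = cis (s + t) * y" for s t and y :: complex
    by (simp add: cis_mult[symmetric] ac_simps)
  show ?thesis
    unfolding Y shift_conj_def Sh_def adj_mat2 mat2_mult cis_cnj by (simp add: phase)
qed

lemma norm_shift_conj: "norm (shift_conj p Y) = norm Y"
proof -
  have "(norm (shift_conj p Y))^2 = (norm Y)^2"
    by (subst (2) mat2_eta) (simp add: shift_conj_eq norm_mat2_sq norm_mult)
  then show ?thesis by (rule power2_eq_imp_eq) simp_all
qed

lemma shift_conj_add: "shift_conj p (X + Y) = shift_conj p X + shift_conj p Y"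
  unfolding shift_conj_eq mat2_add by (simp add: algebra_simps)

lemma continuous_on_mat2:
  assumes "continuous_on S f1" "continuous_on S f2" "continuous_on S f3" "continuous_on S f4"
  shows "continuous_on S (\<lambda>x. mat2 (f1 x) (f2 x) (f3 x) (f4 x))"
proof -
  have "(\<lambda>x. mat2 (f1 x) (f2 x) (f3 x) (f4 x)) =
    (\<lambda>x. \<chi> i j. if i = 1 then (if j = 1 then f1 x else f2 x) else (if j = 1 then f3 x else f4 x))"
    by (rule ext) (simp add: vec_eq_iff forall_2)
  moreover have "continuous_on S
      (\<lambda>x. if i = 1 then (if j = 1 then f1 x else f2 x) else (if j = 1 then f3 x else f4 x))"
    for i j :: 2
    using assms by (cases "i = 1"; cases "j = 1") simp_all
  ultimately show ?thesis by (simp only:) (intro continuous_on_vec_lambda)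
qed

lemma L2_shift_conj:
  assumes "L2 F"
  shows "L2 (\<lambda>p. shift_conj p (F p))"
proof -
  have entry: "continuous_on UNIV (\<lambda>x::real \<times> cmat. snd x $ i $ j)" for i j
    by (intro continuous_on_component continuous_on_snd continuous_on_id)
  have phase: "continuous_on UNIV (\<lambda>x::real \<times> cmat. cis (k * fst x))" for k
    by (intro continuous_intros)
  have "continuous_on UNIV (\<lambda>x. shift_conj (fst x) (snd x))"
    unfolding shift_conj_eq
    by (rule continuous_on_mat2[OF entry continuous_on_mult[OF phase entry]
          continuous_on_mult[OF phase entry] entry])
  moreover have "(\<lambda>p. p) \<in> borel_measurable Pmeas"
    by (intro continuous_imp_measurable_on_sets_lebesgue Pdom_sets continuous_intros)
  ultimately have "(\<lambda>p. shift_conj p (F p)) \<in> borel_measurable Pmeas"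
    using borel_measurable_continuous_Pair[of "\<lambda>p. p"] assms unfolding L2_def by auto
  then show ?thesis using assms unfolding L2_def norm_shift_conj by simp
qed

lemma mean_shift_conj_const: "mean (\<lambda>p. shift_conj p X) = Dg X"
proof -
  have integ: "integrable Pmeas (\<lambda>p. shift_conj p X)"
    by (rule L2_integrable[OF L2_shift_conj[OF L2_const]])
  have off: "integral\<^sup>L Pmeas (\<lambda>p. cis (- (2 * p))) = 0"
            "integral\<^sup>L Pmeas (\<lambda>p. cis (2 * p)) = 0"
    using integral_cis_multiple[of "-2"] integral_cis_multiple[of 2] by simp_all
  have "mean (\<lambda>p. shift_conj p X) $ i $ j
          = (1 / (2 * pi)) *\<^sub>R integral\<^sup>L Pmeas (\<lambda>p. shift_conj p X $ i $ j)" for i j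
    unfolding mean_def by (simp add: integral_entry[OF integ])
  then show ?thesis
    unfolding Dg_def by (simp add: vec_eq_iff forall_2 shift_conj_eq off measure_Pmeas)
qed

subsection \<open>One step of the walk\<close>

lemma Wop_eq:
  assumes "L2 A"
  shows "Wop w A = (\<lambda>p. shift_conj p (Tmap w (mean A) + coin_conj w (A p - mean A)))"
  unfolding Wop_def A0_eq_mean[OF L2_integrable[OF assms]] shift_conj_def coin_conj_def ..

lemma L2_coin_conj_fluct:
  assumes "L2 A"
  shows "L2 (\<lambda>p. coin_conj w (A p - mean A))"
  by (rule L2_bounded_linear[OF bounded_linear_coin_conj L2_minus_mean[OF assms]])

lemma integral_coin_conj_fluct:
  assumes "L2 A"
  shows "integral\<^sup>L Pmeas (\<lambda>p. coin_conj w (A p - mean A)) = 0"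
proof -
  interpret K: bounded_linear "coin_conj w" by (rule bounded_linear_coin_conj)
  show ?thesis
    using integral_bounded_linear[OF bounded_linear_coin_conj L2_integrable[OF L2_minus_mean[OF assms]]]
    by (simp add: integral_minus_mean[OF assms] K.zero)
qed

lemma L2_Wop:
  assumes "L2 A"
  shows "L2 (Wop w A)"
  unfolding Wop_eq[OF assms]
  by (intro L2_shift_conj L2_add L2_const L2_coin_conj_fluct assms)

lemma msq_Wop:
  assumes "L2 A"
  shows "msq (Wop w A) = (norm (Tmap w (mean A)))^2 + (lam w)^2 * msq (\<lambda>p. A p - mean A)"
proof -
  have "msq (Wop w A) = msq (\<lambda>p. Tmap w (mean A) + coin_conj w (A p - mean A))"
    unfolding Wop_eq[OF assms] by (rule msq_scale[where k = 1, simplified]) (simp add: norm_shift_conj)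
  also have "\<dots> = (norm (Tmap w (mean A)))^2 + msq (\<lambda>p. coin_conj w (A p - mean A))"
    by (rule msq_const_plus[OF L2_coin_conj_fluct[OF assms] integral_coin_conj_fluct[OF assms]])
  also have "msq (\<lambda>p. coin_conj w (A p - mean A)) = (lam w)^2 * msq (\<lambda>p. A p - mean A)"
    by (rule msq_scale) (simp add: norm_coin_conj)
  finally show ?thesis .
qed

lemma norm_mean_Wop_le:
  assumes "L2 A"
  shows "norm (mean (Wop w A))
           \<le> norm (Dg (Tmap w (mean A))) + lam w * sqrt (msq (\<lambda>p. A p - mean A))"
proof -
  define K where "K p = shift_conj p (coin_conj w (A p - mean A))" for p
  have LK: "L2 K" unfolding K_def by (rule L2_shift_conj[OF L2_coin_conj_fluct[OF assms]])
  have mean_WA: "mean (Wop w A) = Dg (Tmap w (mean A)) + mean K"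
    unfolding Wop_eq[OF assms] shift_conj_add K_def
    by (simp add: mean_add[OF L2_shift_conj[OF L2_const] LK[unfolded K_def]] mean_shift_conj_const)
  have "(norm (mean K))^2 \<le> (lam w * sqrt (msq (\<lambda>p. A p - mean A)))^2"
  proof -
    have "(norm (mean K))^2 \<le> msq K" by (rule norm_mean_sq_le[OF LK])
    also have "\<dots> = (lam w)^2 * msq (\<lambda>p. A p - mean A)"
      by (rule msq_scale) (simp add: K_def norm_shift_conj norm_coin_conj)
    finally show ?thesis by (simp add: power_mult_distrib msq_nonneg)
  qed
  then have "norm (mean K) \<le> lam w * sqrt (msq (\<lambda>p. A p - mean A))"
    by (rule power2_le_imp_le) (simp add: lam_nonneg msq_nonneg)
  then show ?thesis
    unfolding mean_WA using norm_triangle_ineq[of "Dg (Tmap w (mean A))" "mean K"] by linarith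
qed

(* a coarser one-step bound, valid for every observable: T does not increase the mean *)
lemma msq_Wop_le:
  assumes "L2 C" "0 \<le> w" "w \<le> 1"
  shows "msq (Wop w C) \<le> (norm (mean C))^2 + (lam w)^2 * (msq C - (norm (mean C))^2)"
proof -
  have T_mean: "(norm (Tmap w (mean C)))^2 \<le> (norm (mean C))^2"
    using norm_Tmap_le[OF assms(2,3)] by (simp add: power_mono)
  have "msq (\<lambda>p. C p - mean C) = msq C - (norm (mean C))^2"
    using msq_decomp[OF assms(1)] by linarith
  then show ?thesis
    unfolding msq_Wop[OF assms(1)] using T_mean by simp
qed

subsection \<open>Two steps of the walk\<close>

definition contraction_factor :: "real \<Rightarrow> real \<Rightarrow> real" where
  "contraction_factor rho m =
     (let g = (1 - rho) * (1 - m) / 2 in max (1 - g) (rho * (1 + g)))"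

lemma contraction_factor_bounds:
  assumes rho: "0 \<le> rho" "rho < 1" and m: "0 < m" "m < 1"
  shows "0 \<le> contraction_factor rho m" "contraction_factor rho m < 1"
proof -
  define g where "g = (1 - rho) * (1 - m) / 2"
  have "0 < g" unfolding g_def using rho m by simp
  moreover have "g \<le> 1 - rho"
    using mult_left_mono[of "1 - m" 2 "1 - rho"] rho m unfolding g_def by simp
  moreover have "rho * (2 - rho) < 1"
    using zero_less_power2[of "1 - rho"] rho by (simp add: power2_eq_square algebra_simps)
  ultimately have "rho * (1 + g) < 1"
    using rho mult_left_mono[of "1 + g" "2 - rho" rho] by linarith
  with \<open>0 < g\<close> \<open>g \<le> 1 - rho\<close> rho show "0 \<le> contraction_factor rho m" "contraction_factor rho m < 1"
    unfolding contraction_factor_def Let_def g_def[symmetric] by auto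
qed

(* For an observable A with mean a and
   variance t^2 read n = |a|, e = |T a|, d = |Dg (T a)|, l = lam w, rho = l^2, m = mix w,
   X = msq (W A), c = |mean (W A)| and Y = msq (W (W A)). *)
lemma two_step_inequality:
  fixes rho m l n e d t c X Y :: real
  assumes rho: "0 \<le> rho" "rho < 1" and m: "0 < m" "m < 1"
    and l: "l^2 = rho" and nonneg: "0 \<le> l" "0 \<le> t" "0 \<le> d" "0 \<le> c"
    and mixing: "m * e^2 + (1 - m) * d^2 \<le> m * n^2"
    and X: "X = e^2 + rho * t^2" and c_X: "c^2 \<le> X" and c_d: "c \<le> d + l * t"
    and Y: "Y \<le> c^2 + rho * (X - c^2)"
  shows "Y \<le> contraction_factor rho m * (n^2 + t^2)"
proof -
  define g where "g = (1 - rho) * (1 - m) / 2"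
  have g: "0 \<le> g" "g \<le> 1 - rho"
    using mult_left_mono[of "1 - m" 2 "1 - rho"] rho m unfolding g_def by simp_all
  have c_sq: "c^2 \<le> 2 * d^2 + 2 * rho * t^2"
  proof -
    have "c^2 \<le> (d + l * t)^2" using c_d nonneg by (simp add: power_mono)
    also have "\<dots> \<le> 2 * d^2 + 2 * rho * t^2"
      using zero_le_power2[of "d - l * t"] unfolding l[symmetric] power2_sum power2_diff
      by (simp add: power_mult_distrib algebra_simps)
    finally show ?thesis .
  qed
  have e_n: "e^2 \<le> n^2"
  proof (rule mult_left_le_imp_le)
    have "0 \<le> (1 - m) * d^2" using m by simp
    then show "m * e^2 \<le> m * n^2" using mixing by linarith
  qed (use m in simp)
  have gd: "g * (2 * d^2) \<le> (1 - g) * (n^2 - e^2)"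
  proof -
    have "g * (2 * d^2) = (1 - rho) * ((1 - m) * d^2)" unfolding g_def by simp
    also have "\<dots> \<le> (1 - rho) * (m * (n^2 - e^2))"
      using mixing rho by (intro mult_left_mono) (auto simp: algebra_simps)
    also have "\<dots> \<le> (1 - g) * (n^2 - e^2)"
    proof -
      have "(1 - rho) * m + g \<le> 1 - rho"
        using mult_nonneg_nonneg[of "1 - rho" "1 - m"] rho m unfolding g_def
        by (simp add: field_simps)
      then have "(1 - rho) * m \<le> 1 - g" using rho by linarith
      then have "((1 - rho) * m) * (n^2 - e^2) \<le> (1 - g) * (n^2 - e^2)"
        using e_n by (intro mult_right_mono) simp_all
      then show ?thesis by (simp only: mult.assoc)
    qed
    finally show ?thesis .
  qed
  have "Y \<le> (1 - g) * X + g * c^2"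
    using Y g c_X mult_right_mono[of g "1 - rho" "X - c^2"] by (simp add: algebra_simps)
  also have "\<dots> \<le> (1 - g) * X + g * (2 * d^2) + g * (2 * rho * t^2)"
    using mult_left_mono[OF c_sq g(1)] by (simp add: algebra_simps)
  also have "\<dots> \<le> (1 - g) * n^2 + rho * (1 + g) * t^2"
    using gd X by (simp add: algebra_simps)
  also have "\<dots> \<le> contraction_factor rho m * (n^2 + t^2)"
    unfolding contraction_factor_def Let_def g_def[symmetric]
    by (simp add: distrib_left mult_right_mono add_mono)
  finally show ?thesis .
qed

lemma msq_Wop_Wop_le:
  assumes w: "0 < w" "w < 1" and A: "L2 A" "tr (mean A) = 0"
  shows "msq (Wop w (Wop w A)) \<le> contraction_factor ((lam w)^2) (mix w) * msq A"
proof -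
  define a t C where "a = mean A" and "t = sqrt (msq (\<lambda>p. A p - mean A))" and "C = Wop w A"
  have LC: "L2 C" unfolding C_def by (rule L2_Wop[OF A(1)])
  have t_sq: "t^2 = msq (\<lambda>p. A p - mean A)" unfolding t_def by (simp add: msq_nonneg)
  have "msq (Wop w C) \<le> contraction_factor ((lam w)^2) (mix w) * ((norm a)^2 + t^2)"
  proof (rule two_step_inequality)
    show "msq C = (norm (Tmap w a))^2 + (lam w)^2 * t^2"
      unfolding C_def a_def t_sq by (rule msq_Wop[OF A(1)])
    show "norm (mean C) \<le> norm (Dg (Tmap w a)) + lam w * t"
      unfolding C_def a_def t_def by (rule norm_mean_Wop_le[OF A(1)])
    show "(norm (mean C))^2 \<le> msq C" by (rule norm_mean_sq_le[OF LC])
    show "msq (Wop w C) \<le> (norm (mean C))^2 + (lam w)^2 * (msq C - (norm (mean C))^2)"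
      using msq_Wop_le[OF LC] w by simp
    show "mix w * (norm (Tmap w a))^2 + (1 - mix w) * (norm (Dg (Tmap w a)))^2 \<le> mix w * (norm a)^2"
      using Tmap_traceless_mixing[of a w] A(2) w unfolding a_def by simp
  qed (use w mix_bounds[OF w] lam_nonneg[of w] lam_sq_less_one[OF w] in \<open>simp_all add: t_def msq_nonneg\<close>)
  then show ?thesis unfolding C_def using msq_decomp[OF A(1)] t_sq a_def by simp
qed

theorem lemma1:
  fixes w :: real
  assumes "0 < w" and "w < 1"
  shows "\<exists>c < 1. \<forall>A. inT A \<and> tinner one_T A = 0 \<longrightarrow>
           tnorm (Wop w (Wop w A)) \<le> c * tnorm A"
proof -
  define k where "k = contraction_factor ((lam w)^2) (mix w)"
  have k: "0 \<le> k" "k < 1"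
    unfolding k_def using contraction_factor_bounds lam_sq_less_one[OF assms] mix_bounds[OF assms]
    by simp_all
  have "tnorm (Wop w (Wop w A)) \<le> sqrt k * tnorm A" if "inT A" "tinner one_T A = 0" for A
  proof -
    have A: "L2 A" "tr (mean A) = 0"
      using that tinner_one_T[OF L2_integrable] by (auto simp: inT_iff_L2)
    have "msq (Wop w (Wop w A)) / 2 \<le> k * msq A / 2"
      using msq_Wop_Wop_le[OF assms A] unfolding k_def by simp
    then show ?thesis
      unfolding tnorm_eq_msq real_sqrt_mult[symmetric] by simp
  qed
  moreover have "sqrt k < 1" using k by simp
  ultimately show ?thesis by blast
qed

end
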